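(* Let $F$ be the unique series in $\mathbb{Q}[x,\bar x,y,\bar y][[t]]$ satisfying $(1-St)F=\bar x\bar y-\bar x t[x^0]F-\bar y t[y^0]F$, and write $F(1,1,t)=\sum_{n\ge0}a_nt^n$ (so $a_n$ is the total number of $n$-step walks in the associated model). Then for all $n\ge0$, $$(n+2)(n+4)(n+6)(n^2+2n-1)\,a_{n+2}-4(n+3)(2n^3+9n^2+4n-18)\,a_{n+1}-16(n+1)(n+2)(n+3)(n^2+4n+2)\,a_n=0.$$
   Context: Notation: $\bar x=x^{-1}$, $\bar y=y^{-1}$, $S=x+y+\bar x+\bar y$; for $G=\sum c_{i,j,n}x^iy^jt^n$, $[x^0]G=\sum_{j,n}c_{0,j,n}y^jt^n$ and $[y^0]G=\sum_{i,n}c_{i,0,n}x^it^n$. $F$ counts walks in $\mathbb{Z}^2$ with unit steps $(\pm1,0),(0,\pm1)$ starting at $(-1,-1)$ that never take a west step from a point on the $y$-axis nor a south step from a point on the $x$-axis; $a_n$ is the number of such walks of length $n$. *)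

theory Defs
  imports Complex_Main
begin

text \<open>A series in Q[x, 1/x, y, 1/y][[t]] is represented by its coefficient function:
  F n i j is the coefficient of x^i y^j t^n.\<close>

type_synonym lseries = "nat \<Rightarrow> int \<Rightarrow> int \<Rightarrow> rat"

definition is_lseries :: "lseries \<Rightarrow> bool" where
  "is_lseries F \<longleftrightarrow> (\<forall>n. finite {(i, j). F n i j \<noteq> 0})"

text \<open>Multiplication by S = x + 1/x + y + 1/y.\<close>
definition mult_S :: "lseries \<Rightarrow> lseries" where
  "mult_S G = (\<lambda>n i j. G n (i - 1) j + G n (i + 1) j + G n i (j - 1) + G n i (j + 1))"

definition mult_t :: "lseries \<Rightarrow> lseries" where
  "mult_t G = (\<lambda>n i j. if n = 0 then 0 else G (n - 1) i j)"

definition mult_xbar :: "lseries \<Rightarrow> lseries" where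
  "mult_xbar G = (\<lambda>n i j. G n (i + 1) j)"

definition mult_ybar :: "lseries \<Rightarrow> lseries" where
  "mult_ybar G = (\<lambda>n i j. G n i (j + 1))"

definition coeff_x0 :: "lseries \<Rightarrow> lseries" where
  "coeff_x0 G = (\<lambda>n i j. if i = 0 then G n 0 j else 0)"

definition coeff_y0 :: "lseries \<Rightarrow> lseries" where
  "coeff_y0 G = (\<lambda>n i j. if j = 0 then G n i 0 else 0)"

definition xbar_ybar :: lseries where
  "xbar_ybar = (\<lambda>n i j. if n = 0 \<and> i = -1 \<and> j = -1 then 1 else 0)"

definition func_eq :: "lseries \<Rightarrow> bool" where
  "func_eq F \<longleftrightarrow> (\<forall>n i j.
     F n i j - mult_t (mult_S F) n i j =
     xbar_ybar n i j - mult_t (mult_xbar (coeff_x0 F)) n i j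
                     - mult_t (mult_ybar (coeff_y0 F)) n i j)"

definition eval11 :: "lseries \<Rightarrow> nat \<Rightarrow> rat" where
  "eval11 F n = (\<Sum>(i, j) \<in> {(i, j). F n i j \<noteq> 0}. F n i j)"

end

theory Submission
  imports Defs
begin

text \<open>Rotating the lattice by 45 degrees, an unrestricted walk of length n from the origin
  to (p, q) is a pair of independent \<plusminus>1 walks ending at p + q and p - q, so the free
  count is a product of two binomial coefficients.  The solution F is obtained from it by
  applying, in each coordinate, the reflection-type difference
  h \<mapsto> h (i + 1) - h (i - 1) for i < 0 and h \<mapsto> h (i + 1) - h (i + 3) for i \<ge> 0.
  On even functions this operator commutes with the step operator h \<mapsto> h (a - 1) + h (a + 1)
  except at i = -1, where it drops exactly the contribution of a west (resp. south) step
  from the axis; hence the result satisfies the functional equation, which determines F.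
  Summing over all (i, j) telescopes to the free count summed over {-1..2} \<times> {-1..2}, a quadratic
  form in five binomial coefficients.  Both a (2 m) and a (2 m + 1) are rational multiples
  of the square of (2m choose m), which reduces the recurrence to a rational-function identity.\<close>

fun line_walks :: "nat \<Rightarrow> int \<Rightarrow> nat" where
  "line_walks 0 d = (if d = 0 then 1 else 0)"
| "line_walks (Suc n) d = line_walks n (d - 1) + line_walks n (d + 1)"

lemma line_walks_eq_0: "int n < \<bar>d\<bar> \<Longrightarrow> line_walks n d = 0"
  by (induction n arbitrary: d) auto

lemma line_walks_eq_0_odd: "odd (int n + d) \<Longrightarrow> line_walks n d = 0"
  by (induction n arbitrary: d) auto

lemma line_walks_minus: "line_walks n (- d) = line_walks n d"
proof (induction n arbitrary: d)
  case (Suc n)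
  then show ?case
    using Suc.IH[of "d + 1"] Suc.IH[of "d - 1"] by simp
qed simp

lemma line_walks_binomial: "line_walks n (2 * int k - int n) = n choose k"
proof (induction n arbitrary: k)
  case (Suc n)
  show ?case
  proof (cases k)
    case 0
    then show ?thesis using Suc.IH[of 0] by (simp add: line_walks_eq_0)
  next
    case (Suc j)
    have "2 * int k - int (Suc n) - 1 = 2 * int j - int n"
      and "2 * int k - int (Suc n) + 1 = 2 * int k - int n" using Suc by simp_all
    then have "line_walks (Suc n) (2 * int k - int (Suc n)) = (n choose j) + (n choose k)"
      by (simp only: line_walks.simps Suc.IH)
    then show ?thesis using Suc by simp
  qed
qed simp

lemma line_walks_even_even: "line_walks (2 * m) (2 * int k) = 2 * m choose (m + k)"
  using line_walks_binomial[of "2 * m" "m + k"] by simp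

lemma line_walks_odd_odd: "line_walks (2 * m + 1) (2 * int k + 1) = 2 * m + 1 choose (m + k + 1)"
  using line_walks_binomial[of "2 * m + 1" "m + k + 1"] by simp

definition plane_walks :: "nat \<Rightarrow> int \<Rightarrow> int \<Rightarrow> nat" where
  "plane_walks n p q = line_walks n (p + q) * line_walks n (p - q)"

lemma plane_walks_0: "plane_walks 0 p q = (if p = 0 \<and> q = 0 then 1 else 0)"
  by (auto simp: plane_walks_def)

lemma plane_walks_Suc:
  "plane_walks (Suc n) p q =
     plane_walks n (p - 1) q + plane_walks n (p + 1) q + plane_walks n p (q - 1) + plane_walks n p (q + 1)"
proof -
  have "p - 1 + q = p + q - 1" "p + 1 + q = p + q + 1" "p + (q - 1) = p + q - 1"
    "p + (q + 1) = p + q + 1" "p - 1 - q = p - q - 1" "p + 1 - q = p - q + 1"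
    "p - (q - 1) = p - q + 1" "p - (q + 1) = p - q - 1" by simp_all
  then show ?thesis by (simp only: plane_walks_def line_walks.simps) (simp add: algebra_simps)
qed

lemma plane_walks_minus_left: "plane_walks n (- p) q = plane_walks n p q"
  using line_walks_minus[of n "p - q"] line_walks_minus[of n "p + q"]
  by (simp add: plane_walks_def)

lemma plane_walks_minus_right: "plane_walks n p (- q) = plane_walks n p q"
  by (simp add: plane_walks_def)

lemma plane_walks_eq_0: "int n < \<bar>p\<bar> \<or> int n < \<bar>q\<bar> \<Longrightarrow> plane_walks n p q = 0"
  by (cases "int n < \<bar>p + q\<bar>") (auto simp: plane_walks_def line_walks_eq_0)

text \<open>refl_diff i (line_walks n) counts the n-step walks on the integers from -1 to i that
  never step west from 0.\<close>

definition refl_diff :: "int \<Rightarrow> (int \<Rightarrow> 'a::ab_group_add) \<Rightarrow> 'a" where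
  "refl_diff i h = h (i + 1) - (if i < 0 then h (i - 1) else h (i + 3))"

lemma refl_diff_step:
  assumes even: "\<And>a. h (- a) = h a"
  shows "refl_diff i (\<lambda>a. h (a - 1) + h (a + 1)) =
    refl_diff (i - 1) h + (if i = -1 then 0 else refl_diff (i + 1) h)"
proof -
  consider "i \<le> -2" | "i = -1" | "i = 0" | "i \<ge> 1" by linarith
  then show ?thesis
    by cases (use even[of 1] even[of 2] in \<open>simp_all add: refl_diff_def\<close>)
qed

lemma refl_diff_eq_0:
  assumes "\<And>a. i - 1 \<le> a \<Longrightarrow> a \<le> i + 3 \<Longrightarrow> h a = 0"
  shows "refl_diff i h = 0"
  using assms[of "i + 1"] assms[of "i - 1"] assms[of "i + 3"] by (simp add: refl_diff_def)

lemma refl_diff_sum: "refl_diff i (\<lambda>a. \<Sum>j\<in>J. g j a) = (\<Sum>j\<in>J. refl_diff i (g j))"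
  by (simp add: refl_diff_def sum_subtractf)

lemma sum_refl_diff_telescope:
  "(\<Sum>i\<in>{- int M..int M}. refl_diff i h) =
     h (-1) + h 0 + h 1 + h 2 - h (- int M - 1) - h (- int M) - h (int M + 2) - h (int M + 3)"
proof (induction M)
  case (Suc M)
  have "{- int (Suc M)..int (Suc M)} = insert (- int M - 1) (insert (int M + 1) {- int M..int M})"
    by auto
  then have "(\<Sum>i\<in>{- int (Suc M)..int (Suc M)}. refl_diff i h) =
      refl_diff (- int M - 1) h + refl_diff (int M + 1) h + (\<Sum>i\<in>{- int M..int M}. refl_diff i h)"
    by simp
  also have "\<dots> = (h (- int M) - h (- int M - 2)) + (h (int M + 2) - h (int M + 4)) +
      (h (-1) + h 0 + h 1 + h 2 - h (- int M - 1) - h (- int M) - h (int M + 2) - h (int M + 3))"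
  proof -
    have "refl_diff (- int M - 1) h = h (- int M) - h (- int M - 2)"
      and "refl_diff (int M + 1) h = h (int M + 2) - h (int M + 4)"
      by (simp_all add: refl_diff_def algebra_simps)
    then show ?thesis by (simp only: Suc.IH)
  qed
  also have "\<dots> = h (-1) + h 0 + h 1 + h 2 - h (- int (Suc M) - 1) - h (- int (Suc M))
      - h (int (Suc M) + 2) - h (int (Suc M) + 3)"
  proof -
    have "- int (Suc M) - 1 = - int M - 2" "- int (Suc M) = - int M - 1"
      "int (Suc M) + 2 = int M + 3" "int (Suc M) + 3 = int M + 4" by simp_all
    then show ?thesis by (simp only:) (simp add: algebra_simps)
  qed
  finally show ?case .
qed (simp add: refl_diff_def)

lemma sum_refl_diff:
  assumes "\<And>a. int M \<le> \<bar>a\<bar> \<Longrightarrow> h a = 0"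
  shows "(\<Sum>i\<in>{- int M..int M}. refl_diff i h) = (\<Sum>a\<in>{-1..2}. h a)"
proof -
  have "{-1..2::int} = {-1, 0, 1, 2}" by auto
  then show ?thesis using assms by (simp add: sum_refl_diff_telescope algebra_simps)
qed

definition walk_series :: lseries where
  "walk_series n i j = refl_diff i (\<lambda>p. refl_diff j (\<lambda>q. of_nat (plane_walks n p q)))"

lemma walk_series_0: "walk_series 0 i j = (if i = -1 \<and> j = -1 then 1 else 0)"
  by (simp add: walk_series_def refl_diff_def plane_walks_0)

lemma walk_series_Suc:
  "walk_series (Suc n) i j =
     walk_series n (i - 1) j + walk_series n (i + 1) j + walk_series n i (j - 1) + walk_series n i (j + 1)
     - (if i = -1 then walk_series n 0 j else 0) - (if j = -1 then walk_series n i 0 else 0)"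
proof -
  define w where "w = (\<lambda>p q. of_nat (plane_walks n p q) :: rat)"
  define H where "H = (\<lambda>p. refl_diff j (w p))"
  have w_Suc: "of_nat (plane_walks (Suc n) p q) = (w (p - 1) q + w (p + 1) q) + (w p (q - 1) + w p (q + 1))"
    for p q by (simp add: w_def plane_walks_Suc)
  have "walk_series (Suc n) i j =
      refl_diff i (\<lambda>p. H (p - 1) + H (p + 1)) + refl_diff i (\<lambda>p. refl_diff j (\<lambda>q. w p (q - 1) + w p (q + 1)))"
    by (simp add: walk_series_def w_Suc H_def refl_diff_def)
  also have "refl_diff i (\<lambda>p. H (p - 1) + H (p + 1)) =
      walk_series n (i - 1) j + (if i = -1 then 0 else walk_series n (i + 1) j)"
    by (subst refl_diff_step) (simp_all add: H_def w_def plane_walks_minus_left walk_series_def)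
  also have "refl_diff i (\<lambda>p. refl_diff j (\<lambda>q. w p (q - 1) + w p (q + 1))) =
      walk_series n i (j - 1) + (if j = -1 then 0 else walk_series n i (j + 1))"
    by (subst refl_diff_step) (simp_all add: w_def plane_walks_minus_right walk_series_def refl_diff_def)
  finally show ?thesis by simp
qed

lemma func_eq_walk_series: "func_eq walk_series"
  unfolding func_eq_def
proof (intro allI)
  fix n i j
  show "walk_series n i j - mult_t (mult_S walk_series) n i j =
    xbar_ybar n i j - mult_t (mult_xbar (coeff_x0 walk_series)) n i j
                    - mult_t (mult_ybar (coeff_y0 walk_series)) n i j"
    by (cases n) (simp_all add: walk_series_0 walk_series_Suc mult_t_def xbar_ybar_def mult_S_def
      mult_xbar_def mult_ybar_def coeff_x0_def coeff_y0_def)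
qed

lemma func_eq_unique:
  assumes "func_eq F" and "func_eq G"
  shows "F = G"
proof -
  have F: "F n i j = xbar_ybar n i j + mult_t (mult_S F) n i j
      - mult_t (mult_xbar (coeff_x0 F)) n i j - mult_t (mult_ybar (coeff_y0 F)) n i j"
    and G: "G n i j = xbar_ybar n i j + mult_t (mult_S G) n i j
      - mult_t (mult_xbar (coeff_x0 G)) n i j - mult_t (mult_ybar (coeff_y0 G)) n i j" for n i j
    using assms unfolding func_eq_def by (simp_all add: algebra_simps)
  have "F n i j = G n i j" for n i j
  proof (induction n arbitrary: i j)
    case 0
    show ?case by (subst F, subst G) (simp add: mult_t_def)
  next
    case (Suc n)
    show ?case by (subst F, subst G)
      (simp add: Suc.IH mult_t_def mult_S_def mult_xbar_def mult_ybar_def coeff_x0_def coeff_y0_def)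
  qed
  then show ?thesis by blast
qed

lemma walk_series_eq_0:
  assumes "int n + 3 < \<bar>i\<bar> \<or> int n + 3 < \<bar>j\<bar>"
  shows "walk_series n i j = 0"
  using assms
proof
  assume far: "int n + 3 < \<bar>i\<bar>"
  have "refl_diff j (\<lambda>q. of_nat (plane_walks n p q)) = (0 :: rat)" if "i - 1 \<le> p" "p \<le> i + 3" for p
  proof (rule refl_diff_eq_0)
    from far that have "int n < \<bar>p\<bar>" by arith
    then show "of_nat (plane_walks n p q) = 0" for q by (simp add: plane_walks_eq_0)
  qed
  then show ?thesis unfolding walk_series_def by (rule refl_diff_eq_0)
next
  assume far: "int n + 3 < \<bar>j\<bar>"
  have "refl_diff j (\<lambda>q. of_nat (plane_walks n p q)) = (0 :: rat)" for p
  proof (rule refl_diff_eq_0)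
    fix q assume "j - 1 \<le> q" "q \<le> j + 3"
    with far have "int n < \<bar>q\<bar>" by arith
    then show "of_nat (plane_walks n p q) = 0" by (simp add: plane_walks_eq_0)
  qed
  then show ?thesis by (simp add: walk_series_def refl_diff_def)
qed

lemma support_walk_series:
  "{(i, j). walk_series n i j \<noteq> 0} \<subseteq> {- int (n + 3)..int (n + 3)} \<times> {- int (n + 3)..int (n + 3)}"
proof
  fix x
  assume "x \<in> {(i, j). walk_series n i j \<noteq> 0}"
  then obtain i j where x: "x = (i, j)" and "walk_series n i j \<noteq> 0" by blast
  then have "\<bar>i\<bar> \<le> int n + 3" "\<bar>j\<bar> \<le> int n + 3"
    using walk_series_eq_0[of n i j] by linarith+
  then show "x \<in> {- int (n + 3)..int (n + 3)} \<times> {- int (n + 3)..int (n + 3)}"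
    unfolding x by auto
qed

lemma is_lseries_walk_series: "is_lseries walk_series"
  unfolding is_lseries_def by (auto intro: finite_subset[OF support_walk_series])

lemma eval11_walk_series:
  "eval11 walk_series n = (\<Sum>p\<in>{-1..2}. \<Sum>q\<in>{-1..2}. of_nat (plane_walks n p q))"
proof -
  define M where "M = n + 3"
  have far: "plane_walks n a b = 0" "plane_walks n b a = 0" if "int M \<le> \<bar>a\<bar>" for a b
    using that by (simp_all add: M_def plane_walks_eq_0)
  have "eval11 walk_series n = (\<Sum>(i, j)\<in>{- int M..int M} \<times> {- int M..int M}. walk_series n i j)"
    unfolding eval11_def M_def using support_walk_series[of n] by (intro sum.mono_neutral_left) auto
  also have "\<dots> = (\<Sum>i\<in>{- int M..int M}.
      refl_diff i (\<lambda>p. \<Sum>j\<in>{- int M..int M}. refl_diff j (\<lambda>q. of_nat (plane_walks n p q))))"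
    by (simp add: sum.cartesian_product[symmetric] walk_series_def refl_diff_sum)
  also have "\<dots> = (\<Sum>i\<in>{- int M..int M}. refl_diff i (\<lambda>p. \<Sum>q\<in>{-1..2}. of_nat (plane_walks n p q)))"
    by (subst sum_refl_diff) (simp_all add: far)
  also have "\<dots> = (\<Sum>p\<in>{-1..2}. \<Sum>q\<in>{-1..2}. of_nat (plane_walks n p q))"
    by (rule sum_refl_diff) (simp add: far)
  finally show ?thesis .
qed

lemma of_nat_binomial_Suc_right:
  "(of_nat (n choose Suc k) :: 'a::comm_ring_1) * (of_nat k + 1) = of_nat (n choose k) * (of_nat n - of_nat k)"
proof -
  have "(of_nat ((Suc n choose Suc k) * Suc k) :: 'a) = of_nat (Suc n * (n choose k))"
    by (simp only: Suc_times_binomial_eq)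
  then show ?thesis by (simp add: algebra_simps)
qed

lemma eval11_walk_series_sum:
  "eval11 walk_series n = (let b = \<lambda>d. of_nat (line_walks n d) :: rat in
     b 0 ^ 2 + 4 * b 0 * b 2 + 2 * b 2 ^ 2 + b 0 * b 4 + 4 * b 1 ^ 2 + 4 * b 1 * b 3)"
proof -
  have "{-1..2::int} = {-1, 0, 1, 2}" by auto
  moreover have "line_walks n (- 1) = line_walks n 1" "line_walks n (- 2) = line_walks n 2"
    "line_walks n (- 3) = line_walks n 3"
    using line_walks_minus[of n 1] line_walks_minus[of n 2] line_walks_minus[of n 3] by simp_all
  ultimately show ?thesis
    by (simp add: eval11_walk_series plane_walks_def power2_eq_square algebra_simps)
qed

lemma eval11_walk_series_even:
  fixes m :: nat
  defines "M \<equiv> of_nat m :: rat" and "c \<equiv> of_nat (2 * m choose m) :: rat"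
  shows "eval11 walk_series (2 * m) = 2 * (2 * M + 1) * (2 * M^2 + 4 * M + 1) / ((M + 1)^2 * (M + 2)) * c^2"
proof -
  define c1 where "c1 = (of_nat (2 * m choose (m + 1)) :: rat)"
  define c2 where "c2 = (of_nat (2 * m choose (m + 2)) :: rat)"
  have c1: "c1 = c * M / (M + 1)"
    using of_nat_binomial_Suc_right[of "2 * m" m, where 'a = rat]
    by (simp add: c1_def c_def M_def field_simps)
  have c2: "c2 = c1 * (M - 1) / (M + 2)"
    using of_nat_binomial_Suc_right[of "2 * m" "m + 1", where 'a = rat]
    by (simp add: c1_def c2_def M_def field_simps)
  have M: "M + 1 \<noteq> 0" "M + 2 \<noteq> 0" by (simp_all add: M_def add_nonneg_eq_0_iff)
  have "eval11 walk_series (2 * m) = c^2 + 4 * c * c1 + 2 * c1^2 + c * c2"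
    using line_walks_even_even[of m 0] line_walks_even_even[of m 1] line_walks_even_even[of m 2]
    by (simp del: line_walks.simps add: eval11_walk_series_sum line_walks_eq_0_odd c_def c1_def c2_def)
  also have "\<dots> = 2 * (2 * M + 1) * (2 * M^2 + 4 * M + 1) / ((M + 1)^2 * (M + 2)) * c^2"
    unfolding c2 c1 using M by (simp add: divide_simps) (simp add: algebra_simps power2_eq_square)
  finally show ?thesis .
qed

lemma eval11_walk_series_odd:
  fixes m :: nat
  defines "M \<equiv> of_nat m :: rat" and "c \<equiv> of_nat (2 * m choose m) :: rat"
  shows "eval11 walk_series (2 * m + 1) = 8 * (2 * M + 1)^2 / ((M + 1) * (M + 2)) * c^2"
proof -
  define d1 where "d1 = (of_nat (2 * m + 1 choose (m + 1)) :: rat)"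
  define d2 where "d2 = (of_nat (2 * m + 1 choose (m + 2)) :: rat)"
  have d1: "d1 = (2 * M + 1) * c / (M + 1)"
  proof -
    have "(of_nat ((2 * m + 1 choose (m + 1)) * (m + 1)) :: rat) = of_nat ((2 * m + 1) * (2 * m choose m))"
      using Suc_times_binomial_eq[of "2 * m" m] by simp
    then show ?thesis by (simp add: d1_def c_def M_def field_simps)
  qed
  have d2: "d2 = d1 * M / (M + 2)"
    using of_nat_binomial_Suc_right[of "2 * m + 1" "m + 1", where 'a = rat]
    by (simp add: d1_def d2_def M_def field_simps)
  have M: "M + 1 \<noteq> 0" "M + 2 \<noteq> 0" by (simp_all add: M_def add_nonneg_eq_0_iff)
  have "eval11 walk_series (2 * m + 1) = 4 * d1^2 + 4 * d1 * d2"
    using line_walks_odd_odd[of m 0] line_walks_odd_odd[of m 1]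
    by (simp del: line_walks.simps add: eval11_walk_series_sum line_walks_eq_0_odd d1_def d2_def)
  also have "\<dots> = 8 * (2 * M + 1)^2 / ((M + 1) * (M + 2)) * c^2"
    unfolding d2 d1 using M by (simp add: divide_simps) (simp add: algebra_simps power2_eq_square)
  finally show ?thesis .
qed

lemma central_binomial_Suc: "(m + 1) * (2 * (m + 1) choose (m + 1)) = 2 * (2 * m + 1) * (2 * m choose m)"
proof -
  have "2 * (m + 1) choose (m + 1) = (2 * m + 1 choose m) + (2 * m + 1 choose (m + 1))"
    by simp
  also have "2 * m + 1 choose m = 2 * m + 1 choose (m + 1)"
    using binomial_symmetric[of m "2 * m + 1"] by simp
  finally have central: "2 * (m + 1) choose (m + 1) = 2 * (2 * m + 1 choose (m + 1))" by simp
  have absorb: "(m + 1) * (2 * m + 1 choose (m + 1)) = (2 * m + 1) * (2 * m choose m)"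
    using Suc_times_binomial[of m "2 * m"] by simp
  have "(m + 1) * (2 * (m + 1) choose (m + 1)) = 2 * ((m + 1) * (2 * m + 1 choose (m + 1)))"
    unfolding central by (simp only: mult.left_commute)
  also have "\<dots> = 2 * ((2 * m + 1) * (2 * m choose m))"
    unfolding absorb ..
  finally show ?thesis by (simp only: mult.assoc)
qed

lemma eval11_walk_series_recurrence:
  fixes n :: nat
  defines "a \<equiv> eval11 walk_series" and "m \<equiv> of_nat n :: rat"
  shows "(m + 2) * (m + 4) * (m + 6) * (m^2 + 2*m - 1) * a (n + 2)
    - 4 * (m + 3) * (2*m^3 + 9*m^2 + 4*m - 18) * a (n + 1)
    - 16 * (m + 1) * (m + 2) * (m + 3) * (m^2 + 4*m + 2) * a n = 0"
proof -
  obtain k where n: "n = 2 * k \<or> n = 2 * k + 1" by (metis evenE oddE)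
  define K where "K = (of_nat k :: rat)"
  define c where "c = (of_nat (2 * k choose k) :: rat)"
  have K: "K + 1 \<noteq> 0" "K + 2 \<noteq> 0" "K + 3 \<noteq> 0" by (simp_all add: K_def add_nonneg_eq_0_iff)
  have c': "of_nat (2 * (k + 1) choose (k + 1)) = 2 * (2 * K + 1) / (K + 1) * c"
    using central_binomial_Suc[of k, THEN arg_cong[where f = "of_nat :: nat \<Rightarrow> rat"]] K
    by (simp add: K_def c_def field_simps)
  have a0: "a (2 * k) = 2 * (2 * K + 1) * (2 * K^2 + 4 * K + 1) / ((K + 1)^2 * (K + 2)) * c^2"
    and a1: "a (2 * k + 1) = 8 * (2 * K + 1)^2 / ((K + 1) * (K + 2)) * c^2"
    unfolding a_def eval11_walk_series_even eval11_walk_series_odd by (simp_all add: K_def c_def)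
  have idx: "2 * k + 2 = 2 * (k + 1)" "2 * k + 3 = 2 * (k + 1) + 1" by simp_all
  have a2: "a (2 * k + 2) = 2 * (2 * K + 3) * (2 * (K + 1)^2 + 4 * (K + 1) + 1) / ((K + 2)^2 * (K + 3))
      * (2 * (2 * K + 1) / (K + 1) * c)^2"
    and a3: "a (2 * k + 3) = 8 * (2 * K + 3)^2 / ((K + 2) * (K + 3)) * (2 * (2 * K + 1) / (K + 1) * c)^2"
    unfolding a_def idx eval11_walk_series_even eval11_walk_series_odd c' by (simp_all add: K_def algebra_simps)
  from n show ?thesis
  proof
    assume n: "n = 2 * k"
    have shift: "n + 2 = 2 * k + 2" "n + 1 = 2 * k + 1" "m = 2 * K" using n by (simp_all add: m_def K_def)
    show ?thesis unfolding shift unfolding n a0 a1 a2 using K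
      by (simp add: divide_simps) (simp add: algebra_simps eval_nat_numeral)
  next
    assume n: "n = 2 * k + 1"
    have shift: "n + 2 = 2 * k + 3" "n + 1 = 2 * k + 2" "m = 2 * K + 1" using n by (simp_all add: m_def K_def)
    show ?thesis unfolding shift unfolding n a1 a2 a3 using K
      by (simp add: divide_simps) (simp add: algebra_simps eval_nat_numeral)
  qed
qed

theorem mainTheorem5:
  shows "(\<exists>!F. is_lseries F \<and> func_eq F) \<and>
    (\<forall>F. is_lseries F \<and> func_eq F \<longrightarrow>
      (\<forall>n::nat. let a = eval11 F; m = (of_nat n :: rat) in
        (m + 2) * (m + 4) * (m + 6) * (m^2 + 2*m - 1) * a (n + 2)
        - 4 * (m + 3) * (2*m^3 + 9*m^2 + 4*m - 18) * a (n + 1)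
        - 16 * (m + 1) * (m + 2) * (m + 3) * (m^2 + 4*m + 2) * a n = 0))"
proof -
  have unique: "F = walk_series" if "func_eq F" for F
    using that func_eq_walk_series by (rule func_eq_unique)
  show ?thesis
    using is_lseries_walk_series func_eq_walk_series eval11_walk_series_recurrence unique
    by (auto simp: Let_def)
qed

end
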